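(* Let $k$ be a field. For $n\ge 3$ let $C_n$ be the cycle on $n$ vertices, and for $n\ge 1$ let $P_n$ be the path on $n$ vertices. Then $$\deg h_{R/I(C_n)}(t)=\left\lfloor \tfrac{n}{2}\right\rfloor \quad (n\ge 3),$$ and, for $n\ge 1$, $$\deg h_{R/I(P_n)}(t)=\begin{cases}\left\lceil \tfrac n2\right\rceil & \text{if } n\equiv 0,2 \pmod 3,\\ \left\lceil \tfrac n2\right\rceil-1 & \text{if } n\equiv 1\pmod 3.\end{cases}$$
   Context: For a finite simple graph $G$ with vertex set $\{x_1,\dots,x_n\}$, $R=k[x_1,\dots,x_n]$ and the edge ideal is $I(G)=(x_ix_j : \{x_i,x_j\}\in E(G))\subseteq R$. The Hilbert series $H_{R/I(G)}(t)=\sum_{i\ge0}\dim_k (R/I(G))_i\, t^i$ can be written as a reduced rational function $h_{R/I(G)}(t)/(1-t)^{\dim R/I(G)}$ with $h_{R/I(G)}(t)\in\mathbb Z[t]$, $h_{R/I(G)}(1)\neq 0$; $h_{R/I(G)}(t)$ is the $h$-polynomial of $R/I(G)$. *)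

theory Defs
  imports "HOL-Computational_Algebra.Polynomial" "HOL-Computational_Algebra.Formal_Power_Series"
    "HOL-Computational_Algebra.Polynomial_FPS"
begin

text \<open>A finite simple graph on the vertex set {0..<n} (vertex i stands for x_(i+1)),
  given by its set of edges, each edge a 2-element subset of {0..<n}.\<close>

definition cycle_edges :: "nat \<Rightarrow> nat set set" where
  "cycle_edges n = {{i, (i + 1) mod n} | i. i < n}"

definition path_edges :: "nat \<Rightarrow> nat set set" where
  "path_edges n = {{i, i + 1} | i. i + 1 < n}"

text \<open>Monomials of R = k[x_1..x_n] are exponent vectors a (zero outside {0..<n}).
  Since I(G) is a monomial ideal, the monomials not in I(G) (those not divisible by
  any x_i x_j with {i,j} an edge) form a k-basis of R/I(G); hence the Hilbert function
  dim_k (R/I(G))_d is the number of such monomials of degree d.\<close>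

definition standard_monomials :: "nat \<Rightarrow> nat set set \<Rightarrow> nat \<Rightarrow> (nat \<Rightarrow> nat) set" where
  "standard_monomials n E d =
     {a. (\<forall>i. n \<le> i \<longrightarrow> a i = 0) \<and> (\<Sum>i<n. a i) = d \<and>
         (\<forall>i j. {i, j} \<in> E \<longrightarrow> \<not> (0 < a i \<and> 0 < a j))}"

definition hilbert_fun :: "nat \<Rightarrow> nat set set \<Rightarrow> nat \<Rightarrow> nat" where
  "hilbert_fun n E d = card (standard_monomials n E d)"

definition hilbert_series :: "nat \<Rightarrow> nat set set \<Rightarrow> int fps" where
  "hilbert_series n E = Abs_fps (\<lambda>d. int (hilbert_fun n E d))"

text \<open>The reduced rational form H(t) = h(t)/(1-t)^D with h(1) \<noteq> 0;
  h is the h-polynomial (D is then dim R/I(G)).\<close>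

definition h_polynomial :: "nat \<Rightarrow> nat set set \<Rightarrow> int poly" where
  "h_polynomial n E = (THE h. poly h 1 \<noteq> 0 \<and>
      (\<exists>D::nat. hilbert_series n E * (1 - fps_X) ^ D = fps_of_poly h))"

end

(* Splitting the standard monomials of a graph G by the exponent of one vertex v gives
   H_G(d) = H_{G-v}(d) + sum_{e<d} H_{G-N[v]}(e), i.e. (1-t) H_G = (1-t) H_{G-v} + t H_{G-N[v]}.
   For the last vertex of P_{n+2} this relates P_{n+2}, P_{n+1} and P_n; for a vertex of C_{n+3}
   it relates C_{n+3} to P_{n+2} and (a shifted copy of) P_n.  Since dim R/I(P_n) = ceil(n/2),
   multiplying by a power of (1-t) turns this into a recursion for the h-polynomials h_n of
   paths, and h(C_{n+3}) = h_{n+2} + t h_n; both have value > 0 at t = 1.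
   The coefficients of t^ceil(n/2) and t^(ceil(n/2)-1) in h_n obey a linear recursion that is
   solved in closed form: the top one is 12-periodic with values in {-1,0,1} and vanishes
   exactly for n = 1 mod 3, where the next one grows linearly in n without vanishing. *)

theory Submission
  imports Defs
begin

section \<open>Standard monomials\<close>

lemma standard_monomial_le: "a \<in> standard_monomials n E d \<Longrightarrow> a i \<le> d"
  unfolding standard_monomials_def
  using member_le_sum[of i "{..<n}" a] by (cases "i < n") auto

lemma standard_monomials_finite: "finite (standard_monomials n E d)"
proof (rule finite_subset)
  show "standard_monomials n E d \<subseteq> {a. \<forall>i. (i \<in> {..<n} \<longrightarrow> a i \<in> {..d}) \<and> (i \<notin> {..<n} \<longrightarrow> a i = 0)}"
    using standard_monomial_le by (auto simp: standard_monomials_def)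
qed (intro finite_set_of_finite_funs finite_lessThan finite_atMost)

lemma sum_fun_upd_plus:
  fixes a :: "'a \<Rightarrow> 'b :: comm_monoid_add"
  assumes "finite A" "v \<in> A"
  shows "sum (a(v := x)) A + a v = sum a A + x"
proof -
  have "sum (a(v := x)) (A - {v}) = sum a (A - {v})"
    by (rule sum.cong) auto
  then show ?thesis
    using sum.remove[OF assms, of a] sum.remove[OF assms, of "a(v := x)"] by (simp add: ac_simps)
qed

lemma standard_monomial_neighbour_zero:
  assumes "a \<in> standard_monomials n E d" "{u, v} \<in> E" "0 < a v"
  shows "a u = 0"
proof -
  have "\<not> (0 < a u \<and> 0 < a v)"
    using assms(1,2) unfolding standard_monomials_def by blast
  with assms(3) show ?thesis
    by simp
qed

lemma standard_monomial_clear_vertex: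
  assumes "a \<in> standard_monomials n E d" "v < n"
  shows "a(v := 0) \<in> standard_monomials n E (d - a v)"
proof -
  have "(\<Sum>i<n. (a(v := 0)) i) = d - a v"
    using assms sum_fun_upd_plus[of "{..<n}" v a 0] by (simp add: standard_monomials_def)
  with assms(1) show ?thesis
    by (simp add: standard_monomials_def)
qed

lemma standard_monomial_set_vertex:
  assumes "b \<in> standard_monomials n E e" "v < n" "{v} \<notin> E"
    and "b v = 0" "\<forall>u. {u, v} \<in> E \<longrightarrow> b u = 0"
  shows "b(v := j) \<in> standard_monomials n E (e + j)"
proof -
  have "(\<Sum>i<n. (b(v := j)) i) = e + j"
    using assms sum_fun_upd_plus[of "{..<n}" v b j] by (simp add: standard_monomials_def)
  moreover have "\<not> (0 < (b(v := j)) i \<and> 0 < (b(v := j)) k)" if "{i, k} \<in> E" for i k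
  proof (cases "i = v \<or> k = v")
    case True
    with that assms(3,5) have "(i = v \<and> k \<noteq> v \<and> b k = 0) \<or> (k = v \<and> i \<noteq> v \<and> b i = 0)"
      by (auto simp: insert_commute)
    then show ?thesis
      by auto
  next
    case False
    with that assms(1) show ?thesis
      by (simp add: standard_monomials_def)
  qed
  ultimately show ?thesis
    using assms(1,2) by (simp add: standard_monomials_def)
qed

lemma card_standard_monomials_vertex_value:
  assumes "v < n" "{v} \<notin> E" "0 < j" "j \<le> d"
  shows "card {a \<in> standard_monomials n E d. a v = j} =
         card {b \<in> standard_monomials n E (d - j). b v = 0 \<and> (\<forall>u. {u, v} \<in> E \<longrightarrow> b u = 0)}"
proof (rule bij_betw_same_card[of "\<lambda>a. a(v := 0)"], rule bij_betw_byWitness[where f' = "\<lambda>b. b(v := j)"])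
  show "(\<lambda>a. a(v := 0)) ` {a \<in> standard_monomials n E d. a v = j}
        \<subseteq> {b \<in> standard_monomials n E (d - j). b v = 0 \<and> (\<forall>u. {u, v} \<in> E \<longrightarrow> b u = 0)}"
  proof (rule image_subsetI, elim CollectE conjE, intro CollectI conjI)
    fix a assume a: "a \<in> standard_monomials n E d" "a v = j"
    with assms(1) show "a(v := 0) \<in> standard_monomials n E (d - j)"
      using standard_monomial_clear_vertex by blast
    show "\<forall>u. {u, v} \<in> E \<longrightarrow> (a(v := 0)) u = 0"
      using a assms(3) standard_monomial_neighbour_zero by auto
  qed simp
  show "(\<lambda>b. b(v := j)) ` {b \<in> standard_monomials n E (d - j). b v = 0 \<and> (\<forall>u. {u, v} \<in> E \<longrightarrow> b u = 0)}
        \<subseteq> {a \<in> standard_monomials n E d. a v = j}"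
    using assms standard_monomial_set_vertex[of _ n E "d - j" v j] by auto
qed auto

lemma hilbert_fun_vertex_split:
  assumes "v < n" "{v} \<notin> E"
  shows "hilbert_fun n E d = card {a \<in> standard_monomials n E d. a v = 0} +
           (\<Sum>e<d. card {b \<in> standard_monomials n E e. b v = 0 \<and> (\<forall>u. {u, v} \<in> E \<longrightarrow> b u = 0)})"
proof -
  let ?S = "standard_monomials n E d"
  have "?S = (\<Union>j\<le>d. {a \<in> ?S. a v = j})"
    using standard_monomial_le by blast
  then have "hilbert_fun n E d = card (\<Union>j\<le>d. {a \<in> ?S. a v = j})"
    unfolding hilbert_fun_def by simp
  also have "\<dots> = (\<Sum>j\<le>d. card {a \<in> ?S. a v = j})"
    using standard_monomials_finite by (intro card_UN_disjoint) auto
  also have "\<dots> = card {a \<in> ?S. a v = 0} + (\<Sum>j<d. card {a \<in> ?S. a v = Suc j})"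
    by (rule sum.atMost_shift)
  also have "(\<Sum>j<d. card {a \<in> ?S. a v = Suc j}) =
      (\<Sum>j<d. card {b \<in> standard_monomials n E (d - Suc j). b v = 0 \<and> (\<forall>u. {u, v} \<in> E \<longrightarrow> b u = 0)})"
    using assms by (intro sum.cong card_standard_monomials_vertex_value) auto
  also have "\<dots> = (\<Sum>e<d. card {b \<in> standard_monomials n E e. b v = 0 \<and> (\<forall>u. {u, v} \<in> E \<longrightarrow> b u = 0)})"
    by (rule sum.nat_diff_reindex)
  finally show ?thesis .
qed

lemma standard_monomials_insert_edge:
  "standard_monomials n (insert {u, v} E) d = {a \<in> standard_monomials n E d. a u = 0 \<or> a v = 0}"
proof -
  have "(\<forall>i j. {i, j} \<in> insert {u, v} E \<longrightarrow> \<not> (0 < a i \<and> 0 < a j)) \<longleftrightarrow>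
        (\<forall>i j. {i, j} \<in> E \<longrightarrow> \<not> (0 < a i \<and> 0 < a j)) \<and> (a u = 0 \<or> a v = 0)" for a :: "nat \<Rightarrow> nat"
  proof
    assume H: "\<forall>i j. {i, j} \<in> insert {u, v} E \<longrightarrow> \<not> (0 < a i \<and> 0 < a j)"
    then show "(\<forall>i j. {i, j} \<in> E \<longrightarrow> \<not> (0 < a i \<and> 0 < a j)) \<and> (a u = 0 \<or> a v = 0)"
      using H[rule_format, of u v] by auto
  qed (auto simp: doubleton_eq_iff)
  then show ?thesis
    by (auto simp: standard_monomials_def)
qed

section \<open>Paths and cycles\<close>

lemma path_edge_iff: "{i, j} \<in> path_edges n \<longleftrightarrow> (j = Suc i \<or> i = Suc j) \<and> max i j < n"
  by (auto simp: path_edges_def doubleton_eq_iff)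

lemma singleton_notin_path_edges: "{v} \<notin> path_edges n"
  using path_edge_iff[of v v n] by simp

lemma cycle_edges_Suc: "cycle_edges (Suc m) = insert {m, 0} (path_edges (Suc m))"
proof -
  have "cycle_edges (Suc m) = (\<lambda>i. {i, Suc i mod Suc m}) ` insert m {..<m}"
    unfolding cycle_edges_def lessThan_Suc[symmetric] by (simp add: lessThan_def) blast
  moreover have "(\<lambda>i. {i, Suc i mod Suc m}) ` {..<m} = (\<lambda>i. {i, Suc i}) ` {..<m}"
    by (rule image_cong) simp_all
  moreover have "(\<lambda>i. {i, Suc i}) ` {..<m} = path_edges (Suc m)"
    unfolding path_edges_def by (simp add: lessThan_def) blast
  ultimately show ?thesis
    by simp
qed

lemma standard_monomials_path_iff:
  "a \<in> standard_monomials n (path_edges n) d \<longleftrightarrow>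
     (\<forall>i\<ge>n. a i = 0) \<and> (\<Sum>i<n. a i) = d \<and> (\<forall>k. Suc k < n \<longrightarrow> a k = 0 \<or> a (Suc k) = 0)"
proof -
  have "(\<forall>i j. {i, j} \<in> path_edges n \<longrightarrow> \<not> (0 < a i \<and> 0 < a j)) \<longleftrightarrow>
        (\<forall>k. Suc k < n \<longrightarrow> a k = 0 \<or> a (Suc k) = 0)"
  proof
    assume H: "\<forall>i j. {i, j} \<in> path_edges n \<longrightarrow> \<not> (0 < a i \<and> 0 < a j)"
    show "\<forall>k. Suc k < n \<longrightarrow> a k = 0 \<or> a (Suc k) = 0"
      using H[rule_format, of k "Suc k" for k] by (simp add: path_edge_iff)
  qed (auto simp: path_edge_iff)
  then show ?thesis
    by (simp add: standard_monomials_def)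
qed

lemma standard_monomials_path_truncate:
  assumes "m \<le> N"
  shows "{a \<in> standard_monomials N (path_edges N) d. \<forall>i\<in>{m..<N}. a i = 0} =
         standard_monomials m (path_edges m) d"
proof (rule set_eqI)
  fix a :: "nat \<Rightarrow> nat"
  have zero_iff: "(\<forall>i\<ge>N. a i = 0) \<and> (\<forall>i\<in>{m..<N}. a i = 0) \<longleftrightarrow> (\<forall>i\<ge>m. a i = 0)"
    using assms by auto
  have sum_eq: "(\<Sum>i<N. a i) = (\<Sum>i<m. a i)" if "\<forall>i\<ge>m. a i = 0"
    using assms that by (intro sum.mono_neutral_right) auto
  have adj_iff: "(\<forall>k. Suc k < N \<longrightarrow> a k = 0 \<or> a (Suc k) = 0) \<longleftrightarrow>
      (\<forall>k. Suc k < m \<longrightarrow> a k = 0 \<or> a (Suc k) = 0)" if "\<forall>i\<ge>m. a i = 0"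
  proof (intro iffI allI impI)
    fix k assume "\<forall>k. Suc k < N \<longrightarrow> a k = 0 \<or> a (Suc k) = 0" "Suc k < m"
    then show "a k = 0 \<or> a (Suc k) = 0" using assms by simp
  next
    fix k assume "\<forall>k. Suc k < m \<longrightarrow> a k = 0 \<or> a (Suc k) = 0"
    then show "a k = 0 \<or> a (Suc k) = 0" using that by (cases "Suc k < m") auto
  qed
  show "a \<in> {a \<in> standard_monomials N (path_edges N) d. \<forall>i\<in>{m..<N}. a i = 0} \<longleftrightarrow>
      a \<in> standard_monomials m (path_edges m) d"
  proof
    assume "a \<in> {a \<in> standard_monomials N (path_edges N) d. \<forall>i\<in>{m..<N}. a i = 0}"
    then have "\<forall>i\<ge>m. a i = 0" "(\<Sum>i<N. a i) = d" "\<forall>k. Suc k < N \<longrightarrow> a k = 0 \<or> a (Suc k) = 0"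
      using zero_iff by (simp_all add: standard_monomials_path_iff)
    then show "a \<in> standard_monomials m (path_edges m) d"
      using sum_eq adj_iff by (simp add: standard_monomials_path_iff)
  next
    assume "a \<in> standard_monomials m (path_edges m) d"
    then have "\<forall>i\<ge>m. a i = 0" "(\<Sum>i<m. a i) = d" "\<forall>k. Suc k < m \<longrightarrow> a k = 0 \<or> a (Suc k) = 0"
      by (simp_all add: standard_monomials_path_iff)
    then show "a \<in> {a \<in> standard_monomials N (path_edges N) d. \<forall>i\<in>{m..<N}. a i = 0}"
      using zero_iff sum_eq adj_iff by (simp add: standard_monomials_path_iff)
  qed
qed

lemma card_standard_monomials_path_shift:
  "card {b \<in> standard_monomials (Suc m) (path_edges (Suc m)) d. b 0 = 0} = hilbert_fun m (path_edges m) d"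
  unfolding hilbert_fun_def
proof (rule bij_betw_same_card[of "\<lambda>b. b \<circ> Suc"], rule bij_betw_byWitness[where f' = "case_nat 0"])
  show "\<forall>b \<in> {b \<in> standard_monomials (Suc m) (path_edges (Suc m)) d. b 0 = 0}. case_nat 0 (b \<circ> Suc) = b"
    by (auto simp: fun_eq_iff split: nat.split)
  show "\<forall>a \<in> standard_monomials m (path_edges m) d. case_nat 0 a \<circ> Suc = a"
    by (simp add: fun_eq_iff)
  show "(\<lambda>b. b \<circ> Suc) ` {b \<in> standard_monomials (Suc m) (path_edges (Suc m)) d. b 0 = 0}
      \<subseteq> standard_monomials m (path_edges m) d"
    by (auto simp: standard_monomials_path_iff sum.lessThan_Suc_shift simp del: sum.lessThan_Suc)
  show "case_nat 0 ` standard_monomials m (path_edges m) d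
      \<subseteq> {b \<in> standard_monomials (Suc m) (path_edges (Suc m)) d. b 0 = 0}"
    by (auto simp: standard_monomials_path_iff sum.lessThan_Suc_shift simp del: sum.lessThan_Suc
        split: nat.split) (metis not_gr0)
qed

lemma hilbert_fun_path_rec:
  "hilbert_fun (Suc (Suc n)) (path_edges (Suc (Suc n))) d =
     hilbert_fun (Suc n) (path_edges (Suc n)) d + (\<Sum>e<d. hilbert_fun n (path_edges n) e)"
proof -
  let ?S = "standard_monomials (Suc (Suc n)) (path_edges (Suc (Suc n)))"
  have "{a \<in> ?S d. a (Suc n) = 0} = standard_monomials (Suc n) (path_edges (Suc n)) d"
    using standard_monomials_path_truncate[of "Suc n" "Suc (Suc n)" d] by simp
  moreover have "{b \<in> ?S e. b (Suc n) = 0 \<and> (\<forall>u. {u, Suc n} \<in> path_edges (Suc (Suc n)) \<longrightarrow> b u = 0)} =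
      standard_monomials n (path_edges n) e" for e
  proof -
    have "(\<forall>u. {u, Suc n} \<in> path_edges (Suc (Suc n)) \<longrightarrow> b u = 0) \<longleftrightarrow> b n = 0" for b :: "nat \<Rightarrow> nat"
      by (auto simp: path_edge_iff)
    moreover have "{n..<Suc (Suc n)} = {n, Suc n}"
      by auto
    ultimately show ?thesis
      using standard_monomials_path_truncate[of n "Suc (Suc n)" e] by auto
  qed
  ultimately show ?thesis
    using hilbert_fun_vertex_split[of "Suc n" "Suc (Suc n)" "path_edges (Suc (Suc n))" d]
    by (simp add: singleton_notin_path_edges hilbert_fun_def)
qed

lemma hilbert_fun_cycle_rec:
  "hilbert_fun (Suc (Suc (Suc n))) (cycle_edges (Suc (Suc (Suc n)))) d =
     hilbert_fun (Suc (Suc n)) (path_edges (Suc (Suc n))) d + (\<Sum>e<d. hilbert_fun n (path_edges n) e)"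
proof -
  let ?C = "cycle_edges (Suc (Suc (Suc n)))"
  let ?S = "standard_monomials (Suc (Suc (Suc n))) (path_edges (Suc (Suc (Suc n))))"
  have C: "?C = insert {Suc (Suc n), 0} (path_edges (Suc (Suc (Suc n))))"
    by (rule cycle_edges_Suc)
  have "{a \<in> standard_monomials (Suc (Suc (Suc n))) ?C d. a (Suc (Suc n)) = 0} =
      standard_monomials (Suc (Suc n)) (path_edges (Suc (Suc n))) d"
    using standard_monomials_path_truncate[of "Suc (Suc n)" "Suc (Suc (Suc n))" d]
    by (auto simp: C standard_monomials_insert_edge)
  moreover have "card {b \<in> standard_monomials (Suc (Suc (Suc n))) ?C e.
        b (Suc (Suc n)) = 0 \<and> (\<forall>u. {u, Suc (Suc n)} \<in> ?C \<longrightarrow> b u = 0)} =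
      hilbert_fun n (path_edges n) e" for e
  proof -
    have "(\<forall>u. {u, Suc (Suc n)} \<in> ?C \<longrightarrow> b u = 0) \<longleftrightarrow> b (Suc n) = 0 \<and> b 0 = 0" for b :: "nat \<Rightarrow> nat"
      by (auto simp: C path_edge_iff doubleton_eq_iff)
    moreover have "{Suc n..<Suc (Suc (Suc n))} = {Suc n, Suc (Suc n)}"
      by auto
    ultimately have "{b \<in> standard_monomials (Suc (Suc (Suc n))) ?C e.
        b (Suc (Suc n)) = 0 \<and> (\<forall>u. {u, Suc (Suc n)} \<in> ?C \<longrightarrow> b u = 0)} =
      {b \<in> standard_monomials (Suc n) (path_edges (Suc n)) e. b 0 = 0}"
      using standard_monomials_path_truncate[of "Suc n" "Suc (Suc (Suc n))" e]
      by (auto simp: C standard_monomials_insert_edge)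
    then show ?thesis
      by (simp add: card_standard_monomials_path_shift)
  qed
  moreover have "{Suc (Suc n)} \<notin> ?C"
    by (auto simp: C singleton_notin_path_edges)
  ultimately show ?thesis
    using hilbert_fun_vertex_split[of "Suc (Suc n)" "Suc (Suc (Suc n))" ?C d]
    by (simp add: hilbert_fun_def)
qed

section \<open>Hilbert series and h-polynomials\<close>

lemma one_minus_X_times_partial_sums:
  "(1 - fps_X) * Abs_fps (\<lambda>d. \<Sum>e<d. f e) = fps_X * Abs_fps (f :: nat \<Rightarrow> 'a :: comm_ring_1)"
proof (rule fps_ext)
  fix d
  show "fps_nth ((1 - fps_X) * Abs_fps (\<lambda>d. \<Sum>e<d. f e)) d = fps_nth (fps_X * Abs_fps f) d"
    by (cases d) (simp_all add: algebra_simps)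
qed

lemma hilbert_series_rec:
  assumes "\<And>d. hilbert_fun n E d = hilbert_fun n' E' d + (\<Sum>e<d. hilbert_fun n'' E'' e)"
  shows "(1 - fps_X) * hilbert_series n E =
           (1 - fps_X) * hilbert_series n' E' + fps_X * hilbert_series n'' E''"
proof -
  have "hilbert_series n E = hilbert_series n' E' + Abs_fps (\<lambda>d. \<Sum>e<d. int (hilbert_fun n'' E'' e))"
    unfolding hilbert_series_def using assms by (simp add: fps_eq_iff)
  then show ?thesis
    using one_minus_X_times_partial_sums[of "\<lambda>e. int (hilbert_fun n'' E'' e)"]
    unfolding hilbert_series_def by (simp add: distrib_left)
qed

lemma hilbert_series_0: "hilbert_series 0 E = 1"
proof -
  have "standard_monomials 0 E d = (if d = 0 then {\<lambda>_. 0} else {})" for d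
    by (auto simp: standard_monomials_def fun_eq_iff)
  then show ?thesis
    by (intro fps_ext) (simp add: hilbert_series_def hilbert_fun_def)
qed

lemma fps_of_poly_one_minus_X: "fps_of_poly [:1, -1:] = (1 - fps_X :: 'a :: comm_ring_1 fps)"
  by (simp add: fps_of_poly_pCons)

lemma mult_one_minus_X_pow_add:
  assumes "H * (1 - fps_X) ^ D = fps_of_poly h"
  shows "H * (1 - fps_X) ^ (D + k) = fps_of_poly (h * [:1, -1:] ^ k :: 'a :: comm_ring_1 poly)"
proof -
  have "H * (1 - fps_X) ^ (D + k) = (H * (1 - fps_X) ^ D) * (1 - fps_X) ^ k"
    by (simp add: power_add mult.assoc)
  then show ?thesis
    using assms by (simp add: fps_of_poly_mult fps_of_poly_power fps_of_poly_one_minus_X)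
qed

lemma h_polynomial_eqI:
  assumes "poly h 1 \<noteq> 0" "hilbert_series n E * (1 - fps_X) ^ D = fps_of_poly h"
  shows "h_polynomial n E = h"
  unfolding h_polynomial_def
proof (rule the_equality)
  show "poly h 1 \<noteq> 0 \<and> (\<exists>D. hilbert_series n E * (1 - fps_X) ^ D = fps_of_poly h)"
    using assms by blast
next
  fix h' assume "poly h' 1 \<noteq> 0 \<and> (\<exists>D'. hilbert_series n E * (1 - fps_X) ^ D' = fps_of_poly h')"
  then obtain D' where h': "poly h' 1 \<noteq> 0" "hilbert_series n E * (1 - fps_X) ^ D' = fps_of_poly h'"
    by blast
  show "h' = h"
  proof (cases "D \<le> D'")
    case True
    with assms(2) h'(2) have "h' = h * [:1, -1:] ^ (D' - D)"
      using mult_one_minus_X_pow_add[of _ D h "D' - D"] by (simp add: fps_of_poly_eq_iff)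
    with h'(1) show ?thesis
      by (cases "D' - D") auto
  next
    case False
    with assms(2) h'(2) have "h = h' * [:1, -1:] ^ (D - D')"
      using mult_one_minus_X_pow_add[of _ D' h' "D - D'"] by (simp add: fps_of_poly_eq_iff)
    with assms(1) False show ?thesis
      by (cases "D - D'") auto
  qed
qed

definition path_dim :: "nat \<Rightarrow> nat" where
  "path_dim n = (n + 1) div 2"

lemma path_dim_Suc_Suc: "path_dim (Suc (Suc n)) = Suc (path_dim n)"
  by (simp add: path_dim_def)

lemma path_dim_Suc: "path_dim (Suc n) = (if even n then Suc (path_dim n) else path_dim n)"
  by (auto simp: path_dim_def elim!: evenE oddE)

text \<open>Multiply \<open>(1 - t) H(P(n+2)) = (1 - t) H(P(n+1)) + t H(P(n))\<close> by \<open>(1 - t) ^ (path_dim n + 1)\<close>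
  and use that \<open>path_dim (n + 1)\<close> exceeds \<open>path_dim n\<close> exactly for even \<open>n\<close>.\<close>

fun path_hpoly :: "nat \<Rightarrow> int poly" where
  "path_hpoly 0 = 1"
| "path_hpoly (Suc 0) = 1"
| "path_hpoly (Suc (Suc n)) =
     (if even n then path_hpoly (Suc n) + pCons 0 (path_hpoly n)
      else path_hpoly (Suc n) - pCons 0 (path_hpoly (Suc n)) + pCons 0 (path_hpoly n))"

lemma poly_path_hpoly_1_pos: "poly (path_hpoly n) 1 > 0"
  by (induction n rule: path_hpoly.induct) auto

lemma hilbert_series_path_rec:
  "(1 - fps_X) * hilbert_series (Suc (Suc n)) (path_edges (Suc (Suc n))) =
     (1 - fps_X) * hilbert_series (Suc n) (path_edges (Suc n)) + fps_X * hilbert_series n (path_edges n)"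
  by (rule hilbert_series_rec) (rule hilbert_fun_path_rec)

lemma hilbert_series_path_1: "hilbert_series 1 (path_edges 1) * (1 - fps_X) = 1"
proof -
  have "standard_monomials 1 (path_edges 1) d = {(\<lambda>i. 0)(0 := d)}" for d
    by (auto simp: standard_monomials_path_iff fun_eq_iff)
  then have "hilbert_series 1 (path_edges 1) = Abs_fps (\<lambda>_. 1)"
    by (simp add: hilbert_series_def hilbert_fun_def)
  moreover have "Abs_fps (\<lambda>_. 1 :: int) * (1 - fps_X) = 1"
    by (rule fps_ext) (simp add: algebra_simps)
  ultimately show ?thesis
    by simp
qed

lemma hilbert_series_path:
  "hilbert_series n (path_edges n) * (1 - fps_X) ^ path_dim n = fps_of_poly (path_hpoly n)"
proof (induction n rule: path_hpoly.induct)
  case 1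
  then show ?case by (simp add: hilbert_series_0 path_dim_def)
next
  case 2
  then show ?case using hilbert_series_path_1 by (simp add: path_dim_def)
next
  case (3 n)
  let ?H = "\<lambda>n. hilbert_series n (path_edges n)"
  have rec: "?H (Suc (Suc n)) * (1 - fps_X) ^ path_dim (Suc (Suc n)) =
      ?H (Suc n) * (1 - fps_X) ^ Suc (path_dim n) + fps_X * (?H n * (1 - fps_X) ^ path_dim n)"
  proof -
    have "?H (Suc (Suc n)) * (1 - fps_X) ^ path_dim (Suc (Suc n)) =
        ((1 - fps_X) * ?H (Suc (Suc n))) * (1 - fps_X) ^ path_dim n"
      by (simp add: path_dim_Suc_Suc algebra_simps)
    also have "\<dots> = ((1 - fps_X) * ?H (Suc n) + fps_X * ?H n) * (1 - fps_X) ^ path_dim n"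
      by (simp add: hilbert_series_path_rec)
    finally show ?thesis
      by (simp add: algebra_simps)
  qed
  show ?case
  proof (cases "even n")
    case True
    with 3 rec show ?thesis
      by (simp add: path_dim_Suc fps_of_poly_add fps_of_poly_pCons mult.commute)
  next
    case False
    with 3 rec show ?thesis
      by (simp add: path_dim_Suc fps_of_poly_add fps_of_poly_diff fps_of_poly_pCons algebra_simps)
  qed
qed

lemma h_polynomial_path: "h_polynomial n (path_edges n) = path_hpoly n"
  using h_polynomial_eqI[OF _ hilbert_series_path] poly_path_hpoly_1_pos[of n] by simp

lemma h_polynomial_cycle:
  "h_polynomial (Suc (Suc (Suc n))) (cycle_edges (Suc (Suc (Suc n)))) =
     path_hpoly (Suc (Suc n)) + pCons 0 (path_hpoly n)"
proof (rule h_polynomial_eqI)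
  show "poly (path_hpoly (Suc (Suc n)) + pCons 0 (path_hpoly n)) 1 \<noteq> 0"
    using poly_path_hpoly_1_pos[of "Suc (Suc n)"] poly_path_hpoly_1_pos[of n] by simp
  let ?H = "\<lambda>n. hilbert_series n (path_edges n)"
  let ?C = "hilbert_series (Suc (Suc (Suc n))) (cycle_edges (Suc (Suc (Suc n))))"
  have rec: "(1 - fps_X) * ?C = (1 - fps_X) * ?H (Suc (Suc n)) + fps_X * ?H n"
    by (rule hilbert_series_rec) (rule hilbert_fun_cycle_rec)
  have "?C * (1 - fps_X) ^ Suc (path_dim n) = ((1 - fps_X) * ?C) * (1 - fps_X) ^ path_dim n"
    by (simp add: algebra_simps)
  also have "\<dots> = ?H (Suc (Suc n)) * (1 - fps_X) ^ path_dim (Suc (Suc n)) +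
      fps_X * (?H n * (1 - fps_X) ^ path_dim n)"
    unfolding rec by (simp add: path_dim_Suc_Suc algebra_simps)
  also have "\<dots> = fps_of_poly (path_hpoly (Suc (Suc n)) + pCons 0 (path_hpoly n))"
    by (simp add: hilbert_series_path fps_of_poly_add fps_of_poly_pCons mult.commute)
  finally show "?C * (1 - fps_X) ^ Suc (path_dim n) =
      fps_of_poly (path_hpoly (Suc (Suc n)) + pCons 0 (path_hpoly n))" .
qed

section \<open>Degrees\<close>

fun path_top_coeff :: "nat \<Rightarrow> int" where
  "path_top_coeff 0 = 1"
| "path_top_coeff (Suc 0) = 0"
| "path_top_coeff (Suc (Suc n)) =
     (if even n then path_top_coeff (Suc n) + path_top_coeff n else path_top_coeff n - path_top_coeff (Suc n))"

fun path_subtop_coeff :: "nat \<Rightarrow> int" where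
  "path_subtop_coeff 0 = 0"
| "path_subtop_coeff (Suc 0) = 1"
| "path_subtop_coeff (Suc (Suc n)) =
     (if even n then path_subtop_coeff (Suc n) + path_subtop_coeff n
      else path_top_coeff (Suc n) - path_subtop_coeff (Suc n) + path_subtop_coeff n)"

lemma degree_pCons_0_le: "degree (pCons 0 p) \<le> Suc (degree p)"
  by (cases "p = 0") auto

lemma path_hpoly_top_coeffs:
  "degree (path_hpoly n) \<le> path_dim n \<and>
   coeff (path_hpoly n) (path_dim n) = path_top_coeff n \<and>
   coeff (pCons 0 (path_hpoly n)) (path_dim n) = path_subtop_coeff n"
proof (induction n rule: path_hpoly.induct)
  case (3 n)
  have ih: "degree (path_hpoly m) \<le> path_dim m" "coeff (path_hpoly m) (path_dim m) = path_top_coeff m"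
      "coeff (pCons 0 (path_hpoly m)) (path_dim m) = path_subtop_coeff m" if "m \<in> {n, Suc n}" for m
    using 3 that by (cases "even n"; auto)+
  show ?case
  proof (cases "even n")
    case True
    then have dim: "path_dim (Suc n) = Suc (path_dim n)" "path_dim (Suc (Suc n)) = Suc (path_dim n)"
      by (simp_all add: path_dim_Suc path_dim_Suc_Suc)
    have "degree (path_hpoly (Suc n) + pCons 0 (path_hpoly n)) \<le> Suc (path_dim n)"
      using ih[of n] ih[of "Suc n"] dim degree_pCons_0_le[of "path_hpoly n"] by (intro degree_add_le) auto
    with True ih[of n] ih[of "Suc n"] dim show ?thesis
      by simp
  next
    case False
    then have dim: "path_dim (Suc n) = path_dim n" "path_dim (Suc (Suc n)) = Suc (path_dim n)"
      by (simp_all add: path_dim_Suc path_dim_Suc_Suc)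
    have "degree (path_hpoly (Suc n) - pCons 0 (path_hpoly (Suc n)) + pCons 0 (path_hpoly n)) \<le> Suc (path_dim n)"
      using ih[of n] ih[of "Suc n"] dim degree_pCons_0_le[of "path_hpoly n"] degree_pCons_0_le[of "path_hpoly (Suc n)"]
      by (intro degree_add_le degree_diff_le) auto
    moreover have "coeff (path_hpoly (Suc n)) (Suc (path_dim n)) = 0"
      using ih[of "Suc n"] dim by (intro coeff_eq_0) auto
    ultimately show ?thesis
      using False ih[of n] ih[of "Suc n"] dim by simp
  qed
qed (simp_all add: path_dim_def)

text \<open>The tables are read off from the first 24 values of the two recursions.\<close>

definition top_table :: "int list" where
  "top_table = [1, 0, 1, -1, 0, -1, -1, 0, -1, 1, 0, 1]"

definition subtop_table :: "int list" where
  "subtop_table = [0, 1, 1, 1, 2, -1, 1, -3, -2, -2, -4, 2]"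

definition subtop_slope :: "int list" where
  "subtop_slope = [-2, 4, 2, 2, 4, -2, 2, -4, -2, -2, -4, 2]"

lemma less_12_cases:
  fixes r :: nat
  assumes "r < 12"
  obtains "r = 0" | "r = 1" | "r = 2" | "r = 3" | "r = 4" | "r = 5" | "r = 6" | "r = 7" | "r = 8"
    | "r = 9" | "r = 10" | "r = 11"
proof -
  have "r = 0 \<or> r = 1 \<or> r = 2 \<or> r = 3 \<or> r = 4 \<or> r = 5 \<or> r = 6 \<or> r = 7 \<or> r = 8 \<or> r = 9 \<or> r = 10 \<or> r = 11"
    using assms by presburger
  with that show ?thesis
    by blast
qed

lemma path_coeffs_closed_form:
  "path_top_coeff n = top_table ! (n mod 12) \<and>
   path_subtop_coeff n = subtop_table ! (n mod 12) + subtop_slope ! (n mod 12) * int (n div 12)"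
proof (induction n rule: path_top_coeff.induct)
  case (3 n)
  have ih: "path_top_coeff (Suc n) = top_table ! (Suc n mod 12) \<and>
      path_subtop_coeff (Suc n) = subtop_table ! (Suc n mod 12) + subtop_slope ! (Suc n mod 12) * int (Suc n div 12)"
    "path_top_coeff n = top_table ! (n mod 12) \<and>
      path_subtop_coeff n = subtop_table ! (n mod 12) + subtop_slope ! (n mod 12) * int (n div 12)"
    using 3 by (cases "even n"; simp)+
  have parity: "even n \<longleftrightarrow> even (n mod 12)"
    by (simp add: dvd_mod_iff)
  have "n mod 12 < 12"
    by simp
  then show ?case
    by (cases rule: less_12_cases) (simp_all add: ih parity mod_Suc div_Suc top_table_def subtop_table_def subtop_slope_def algebra_simps)
qed (simp_all add: top_table_def subtop_table_def subtop_slope_def)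

lemma path_top_coeff_eq_0_iff: "path_top_coeff n = 0 \<longleftrightarrow> n mod 3 = 1"
proof -
  have "n mod 12 < 12"
    by simp
  then show ?thesis
    unfolding path_coeffs_closed_form[THEN conjunct1] mod_mod_cancel[of 3 12 n, symmetric, simplified]
    by (cases rule: less_12_cases) (simp_all add: top_table_def)
qed

lemma path_subtop_coeff_nonzero:
  assumes "n mod 3 = 1"
  shows "path_subtop_coeff n \<noteq> 0"
proof -
  have "n mod 12 < 12"
    by simp
  moreover have "n mod 12 mod 3 = 1"
    using assms by (simp add: mod_mod_cancel)
  ultimately show ?thesis
    unfolding path_coeffs_closed_form[THEN conjunct2]
    by (cases rule: less_12_cases) (auto simp: subtop_table_def subtop_slope_def)
qed

lemma path_top_coeff_cycle_nonzero: "path_top_coeff (Suc (Suc n)) + path_top_coeff n \<noteq> 0"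
proof -
  have "n mod 12 < 12"
    by simp
  moreover have "Suc (Suc n) mod 12 = (n mod 12 + 2) mod 12"
    by presburger
  ultimately show ?thesis
    unfolding path_coeffs_closed_form[THEN conjunct1]
    by (cases rule: less_12_cases) (simp_all add: top_table_def)
qed

lemma degree_path_hpoly:
  assumes "1 \<le> n"
  shows "degree (path_hpoly n) = (if n mod 3 = 1 then path_dim n - 1 else path_dim n)"
proof -
  have deg: "degree (path_hpoly n) \<le> path_dim n"
    and top: "coeff (path_hpoly n) (path_dim n) = path_top_coeff n"
    and subtop: "coeff (pCons 0 (path_hpoly n)) (path_dim n) = path_subtop_coeff n"
    using path_hpoly_top_coeffs[of n] by auto
  show ?thesis
  proof (cases "n mod 3 = 1")
    case False
    then have "coeff (path_hpoly n) (path_dim n) \<noteq> 0"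
      using top path_top_coeff_eq_0_iff by simp
    then show ?thesis
      using deg False le_degree by fastforce
  next
    case True
    have dim: "path_dim n = Suc (path_dim n - 1)"
      using assms by (simp add: path_dim_def)
    have "coeff (path_hpoly n) (path_dim n - 1) \<noteq> 0"
      using subtop path_subtop_coeff_nonzero[OF True] dim by (metis coeff_pCons_Suc)
    then have "path_dim n - 1 \<le> degree (path_hpoly n)"
      by (rule le_degree)
    moreover have "degree (path_hpoly n) \<noteq> path_dim n"
      using top True path_top_coeff_eq_0_iff poly_path_hpoly_1_pos[of n] by (metis leading_coeff_0_iff poly_0 less_irrefl)
    ultimately show ?thesis
      using deg True by simp
  qed
qed

lemma degree_h_polynomial_cycle:
  "degree (h_polynomial (Suc (Suc (Suc n))) (cycle_edges (Suc (Suc (Suc n))))) = Suc (path_dim n)"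
proof -
  let ?h = "path_hpoly (Suc (Suc n)) + pCons 0 (path_hpoly n)"
  note top2 = path_hpoly_top_coeffs[of "Suc (Suc n)"] and top0 = path_hpoly_top_coeffs[of n]
  have "degree ?h \<le> Suc (path_dim n)"
    using top2 top0 degree_pCons_0_le[of "path_hpoly n"] by (intro degree_add_le) (auto simp: path_dim_Suc_Suc)
  moreover have "coeff ?h (Suc (path_dim n)) \<noteq> 0"
    using top2 top0 path_top_coeff_cycle_nonzero[of n] by (simp add: path_dim_Suc_Suc)
  then have "Suc (path_dim n) \<le> degree ?h"
    by (rule le_degree)
  ultimately show ?thesis
    by (simp add: h_polynomial_cycle)
qed

lemma nat_ceiling_half: "nat \<lceil>real n / 2\<rceil> = (n + 1) div 2"
proof -
  have "\<lceil>real n / 2\<rceil> = \<lceil>of_int (int n) / of_int 2 :: real\<rceil>"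
    by simp
  also have "\<dots> = - (- int n div 2)"
    by (rule ceiling_divide_eq_div)
  also have "\<dots> = int ((n + 1) div 2)"
    by presburger
  finally show ?thesis
    by simp
qed

theorem theorem4p5:
  shows "(\<forall>n::nat. 3 \<le> n \<longrightarrow> degree (h_polynomial n (cycle_edges n)) = n div 2)
       \<and> (\<forall>n::nat. 1 \<le> n \<longrightarrow>
            degree (h_polynomial n (path_edges n)) =
              (if n mod 3 = 1 then nat \<lceil>real n / 2\<rceil> - 1 else nat \<lceil>real n / 2\<rceil>))"
proof safe
  fix n :: nat
  assume "3 \<le> n"
  then have "n = Suc (Suc (Suc (n - 3)))" and "Suc (path_dim (n - 3)) = n div 2"
    unfolding path_dim_def by presburger+
  then show "degree (h_polynomial n (cycle_edges n)) = n div 2"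
    using degree_h_polynomial_cycle[of "n - 3"] by metis
next
  fix n :: nat
  assume "1 \<le> n"
  then show "degree (h_polynomial n (path_edges n)) =
      (if n mod 3 = 1 then nat \<lceil>real n / 2\<rceil> - 1 else nat \<lceil>real n / 2\<rceil>)"
    using degree_path_hpoly by (simp add: h_polynomial_path nat_ceiling_half path_dim_def)
qed

end
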